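(* Let $\beta=(\beta_n)_{n\ge0}$ be a sequence of positive numbers with $\liminf_n\beta_n^{1/n}\ge1$. If every symbol $\phi$ with $\phi(0)=0$ induces a bounded composition operator $C_\phi$ on $H^2(\beta)$, then $\beta$ is bounded above.
   Context: $H^2(\beta)$ is the Hilbert space of analytic functions $f(z)=\sum_{n\ge0}a_nz^n$ on the unit disk $\mathbb D$ with $\|f\|^2=\sum_{n\ge0}|a_n|^2\beta_n<\infty$. A symbol is a non-constant analytic map $\phi:\mathbb D\to\mathbb D$ and $C_\phi f=f\circ\phi$; "bounded on $H^2(\beta)$" means $C_\phi$ maps $H^2(\beta)$ boundedly into itself. *)

theory Defs
  imports "HOL-Complex_Analysis.Complex_Analysis"
begin

definition taylor_coeff :: "(complex \<Rightarrow> complex) \<Rightarrow> nat \<Rightarrow> complex" where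
  "taylor_coeff f n = (deriv ^^ n) f 0 / of_nat (fact n)"

definition in_H2 :: "(nat \<Rightarrow> real) \<Rightarrow> (complex \<Rightarrow> complex) \<Rightarrow> bool" where
  "in_H2 \<beta> f \<longleftrightarrow> f holomorphic_on ball 0 1 \<and>
     summable (\<lambda>n. (cmod (taylor_coeff f n))^2 * \<beta> n)"

definition H2_norm :: "(nat \<Rightarrow> real) \<Rightarrow> (complex \<Rightarrow> complex) \<Rightarrow> real" where
  "H2_norm \<beta> f = sqrt (\<Sum>n. (cmod (taylor_coeff f n))^2 * \<beta> n)"

definition is_symbol :: "(complex \<Rightarrow> complex) \<Rightarrow> bool" where
  "is_symbol \<phi> \<longleftrightarrow> \<phi> holomorphic_on ball 0 1 \<and> \<phi> ` ball 0 1 \<subseteq> ball 0 1 \<and>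
     \<not> (\<exists>c. \<forall>z\<in>ball 0 1. \<phi> z = c)"

definition comp_bounded :: "(nat \<Rightarrow> real) \<Rightarrow> (complex \<Rightarrow> complex) \<Rightarrow> bool" where
  "comp_bounded \<beta> \<phi> \<longleftrightarrow> (\<exists>C. \<forall>f. in_H2 \<beta> f \<longrightarrow>
     in_H2 \<beta> (f \<circ> \<phi>) \<and> H2_norm \<beta> (f \<circ> \<phi>) \<le> C * H2_norm \<beta> f)"

end

theory Submission
  imports Defs
begin

text \<open>If \<open>\<beta>\<close> were unbounded, choose \<open>0 < n_0 < n_1 < ...\<close> with \<open>\<beta> (n_k) \<ge> 4^(k+2)\<close> and
  consider the lacunary symbol \<open>\<phi> z = \<Sum>_k 2^-(k+2) z^(n_k)\<close>: its coefficients sum to \<open>1/2\<close>,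
  so it maps the disk into itself, and \<open>\<phi> 0 = 0\<close>. The identity lies in \<open>H^2(\<beta>)\<close>, so
  \<open>\<phi> = C_\<phi> id \<in> H^2(\<beta>)\<close>; but every term \<open>|\<phi>_(n_k)|^2 \<beta>(n_k)\<close> of its norm series is
  at least \<open>1\<close>.\<close>

lemma taylor_coeff_eval_fps:
  "fps_conv_radius F > 0 \<Longrightarrow> taylor_coeff (eval_fps F) n = fps_nth F n"
  by (simp add: taylor_coeff_def fps_nth_conv_deriv)

lemma taylor_coeff_eventually_const:
  assumes "eventually (\<lambda>z. f z = c) (nhds 0)" and "m > 0"
  shows "taylor_coeff f m = 0"
proof -
  have "(deriv ^^ m) f 0 = (deriv ^^ m) (\<lambda>_. c) 0"
    by (rule higher_deriv_cong_ev[OF assms(1) refl])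
  with \<open>m > 0\<close> show ?thesis by (simp add: taylor_coeff_def)
qed

lemma in_H2_id: "in_H2 \<beta> (\<lambda>z. z)"
proof -
  have "eval_fps (fps_X :: complex fps) = (\<lambda>z. z)" by (rule ext) simp
  then have "taylor_coeff (\<lambda>z. z) m = (if m = 1 then 1 else 0)" for m
    using taylor_coeff_eval_fps[of "fps_X :: complex fps" m] by (simp add: fps_X_nth)
  then have "(\<lambda>m. (cmod (taylor_coeff (\<lambda>z. z) m))\<^sup>2 * \<beta> m) = (\<lambda>m. if m = 1 then \<beta> m else 0)"
    by auto
  then show ?thesis by (simp add: in_H2_def holomorphic_on_id)
qed

lemma in_H2_if_comp_bounded:
  assumes "comp_bounded \<beta> \<phi>"
  shows "in_H2 \<beta> \<phi>"
proof -
  from assms obtain C where "\<And>f. in_H2 \<beta> f \<Longrightarrow> in_H2 \<beta> (f \<circ> \<phi>)"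
    unfolding comp_bounded_def by blast
  from this[OF in_H2_id] show ?thesis by (simp add: o_def)
qed

lemma norm_mult_power_le:
  fixes a z :: "'a :: real_normed_div_algebra"
  assumes "norm z \<le> 1"
  shows "norm (a * z ^ m) \<le> norm a"
proof -
  have "norm (z ^ m) \<le> 1" using assms by (simp add: norm_power power_le_one)
  then show ?thesis by (simp add: norm_mult mult_left_le)
qed

lemma summable_norm_mult_power:
  fixes a :: "nat \<Rightarrow> 'a :: real_normed_div_algebra"
  assumes "summable (\<lambda>m. norm (a m))" and "norm z \<le> 1"
  shows "summable (\<lambda>m. norm (a m * z ^ m))"
proof (rule summable_comparison_test'[OF assms(1)])
  show "norm (norm (a m * z ^ m)) \<le> norm (a m)" for m
    using norm_mult_power_le[OF assms(2)] by simp
qed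

lemma fps_conv_radius_ge_1_if_summable_norm:
  fixes a :: "nat \<Rightarrow> complex"
  assumes "summable (\<lambda>m. norm (a m))"
  shows "fps_conv_radius (Abs_fps a) \<ge> 1"
  unfolding fps_conv_radius_def
proof (rule conv_radius_geI_ex')
  fix r :: real assume "0 < r" "ereal r < 1"
  then have "norm (of_real r :: complex) \<le> 1" by simp
  from summable_norm_mult_power[OF assms this]
  show "summable (\<lambda>m. fps_nth (Abs_fps a) m * of_real r ^ m)"
    by (simp add: summable_norm_cancel)
qed

lemma taylor_coeff_eval_fps_summable_norm:
  fixes a :: "nat \<Rightarrow> complex"
  assumes "summable (\<lambda>m. norm (a m))"
  shows "taylor_coeff (eval_fps (Abs_fps a)) m = a m"
proof -
  have "fps_conv_radius (Abs_fps a) > 0"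
    by (rule less_le_trans[OF _ fps_conv_radius_ge_1_if_summable_norm[OF assms]]) simp
  then show ?thesis by (simp add: taylor_coeff_eval_fps)
qed

lemma norm_eval_fps_le_sum_norm:
  fixes a :: "nat \<Rightarrow> complex"
  assumes summ: "summable (\<lambda>m. norm (a m))" and "norm z \<le> 1"
  shows "norm (eval_fps (Abs_fps a) z) \<le> (\<Sum>m. norm (a m))"
proof -
  have le: "norm (a m * z ^ m) \<le> norm (a m)" for m
    using \<open>norm z \<le> 1\<close> by (rule norm_mult_power_le)
  have summ': "summable (\<lambda>m. norm (a m * z ^ m))"
    using summ \<open>norm z \<le> 1\<close> by (rule summable_norm_mult_power)
  have "norm (eval_fps (Abs_fps a) z) = norm (\<Sum>m. a m * z ^ m)" by (simp add: eval_fps_def)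
  also have "\<dots> \<le> (\<Sum>m. norm (a m * z ^ m))" by (rule summable_norm[OF summ'])
  also have "\<dots> \<le> (\<Sum>m. norm (a m))" by (rule suminf_le[OF le summ' summ])
  finally show ?thesis .
qed

lemma is_symbol_eval_fps:
  fixes a :: "nat \<Rightarrow> complex"
  assumes summ: "summable (\<lambda>m. norm (a m))" and small: "(\<Sum>m. norm (a m)) < 1"
    and "m > 0" and "a m \<noteq> 0"
  shows "is_symbol (eval_fps (Abs_fps a))"
  unfolding is_symbol_def
proof (intro conjI)
  let ?g = "eval_fps (Abs_fps a)"
  have "fps_conv_radius (Abs_fps a) \<ge> 1"
    by (rule fps_conv_radius_ge_1_if_summable_norm[OF summ])
  then show "?g holomorphic_on ball 0 1"
    by (intro holomorphic_on_eval_fps ball_eball_mono) (simp add: one_ereal_def)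
  show "?g ` ball 0 1 \<subseteq> ball 0 1"
  proof
    fix w assume "w \<in> ?g ` ball 0 1"
    then obtain z where "z \<in> ball 0 1" and w: "w = ?g z" by blast
    then have "norm z \<le> 1" by simp
    then have "norm w \<le> (\<Sum>m. norm (a m))"
      unfolding w by (rule norm_eval_fps_le_sum_norm[OF summ])
    with small show "w \<in> ball 0 1" by simp
  qed
  show "\<not> (\<exists>c. \<forall>z\<in>ball 0 1. ?g z = c)"
  proof
    assume "\<exists>c. \<forall>z\<in>ball 0 1. ?g z = c"
    then obtain c where "\<forall>z\<in>ball 0 1. ?g z = c" by blast
    then have "eventually (\<lambda>z. ?g z = c) (nhds 0)"
      using eventually_nhds_in_open[of "ball (0::complex) 1" 0] by (auto elim!: eventually_mono)
    then have "taylor_coeff ?g m = 0" using \<open>m > 0\<close> by (rule taylor_coeff_eventually_const)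
    with \<open>a m \<noteq> 0\<close> show False
      by (simp add: taylor_coeff_eval_fps_summable_norm[OF summ])
  qed
qed

lemma summable_coeffs_if_in_H2_eval_fps:
  fixes a :: "nat \<Rightarrow> complex"
  assumes "summable (\<lambda>m. norm (a m))" and "in_H2 \<beta> (eval_fps (Abs_fps a))"
  shows "summable (\<lambda>m. (norm (a m))\<^sup>2 * \<beta> m)"
  using assms(2) by (simp add: in_H2_def taylor_coeff_eval_fps_summable_norm[OF assms(1)])

definition lacunary_coeffs :: "(nat \<Rightarrow> nat) \<Rightarrow> (nat \<Rightarrow> real) \<Rightarrow> nat \<Rightarrow> complex" where
  "lacunary_coeffs n c m = (if m \<in> range n then of_real (c (inv n m)) else 0)"

lemma lacunary_coeffs_at: "strict_mono n \<Longrightarrow> lacunary_coeffs n c (n k) = of_real (c k)"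
  by (simp add: lacunary_coeffs_def strict_mono_imp_inj_on)

lemma lacunary_coeffs_outside: "m \<notin> range n \<Longrightarrow> lacunary_coeffs n c m = 0"
  by (simp add: lacunary_coeffs_def)

lemma norm_lacunary_coeffs_sums:
  assumes "strict_mono n" and "\<And>k. c k \<ge> 0" and "c sums s"
  shows "(\<lambda>m. norm (lacunary_coeffs n c m)) sums s"
proof -
  have "(\<lambda>k. norm (lacunary_coeffs n c (n k))) = c"
    using assms(1,2) by (simp add: lacunary_coeffs_at)
  with assms(3) have "(\<lambda>k. norm (lacunary_coeffs n c (n k))) sums s" by simp
  moreover have "norm (lacunary_coeffs n c m) = 0" if "m \<notin> range n" for m
    using that by (simp add: lacunary_coeffs_outside)
  ultimately show ?thesis
    using sums_mono_reindex[OF assms(1), of "\<lambda>m. norm (lacunary_coeffs n c m)" s] by blast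
qed

lemma eval_fps_lacunary_at_0:
  assumes "strict_mono n" and "n 0 > 0"
  shows "eval_fps (Abs_fps (lacunary_coeffs n c)) 0 = 0"
proof -
  have "n k > 0" for k
    using assms(2) strict_mono_less_eq[OF assms(1), of 0 k] by linarith
  then have "0 \<notin> range n" by (metis rangeE less_not_refl)
  then show ?thesis by (simp add: eval_fps_at_0 lacunary_coeffs_outside)
qed

lemma is_symbol_lacunary:
  assumes "strict_mono n" and "n 0 > 0"
    and "\<And>k. c k \<ge> 0" and "c sums s" and "s < 1" and "c 0 \<noteq> 0"
  shows "is_symbol (eval_fps (Abs_fps (lacunary_coeffs n c)))"
proof (rule is_symbol_eval_fps)
  have "(\<lambda>m. norm (lacunary_coeffs n c m)) sums s"
    using assms(1,3,4) by (rule norm_lacunary_coeffs_sums)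
  then show "summable (\<lambda>m. norm (lacunary_coeffs n c m))"
    and "(\<Sum>m. norm (lacunary_coeffs n c m)) < 1"
    using \<open>s < 1\<close> by (auto simp: sums_iff)
  show "n 0 > 0" by fact
  show "lacunary_coeffs n c (n 0) \<noteq> 0"
    using assms(1,6) by (simp add: lacunary_coeffs_at)
qed

lemma unbounded_exceeds_beyond:
  fixes f :: "nat \<Rightarrow> real"
  assumes "\<not> bdd_above (range f)"
  shows "\<exists>m>N. f m \<ge> M"
proof (rule ccontr)
  assume "\<not> (\<exists>m>N. f m \<ge> M)"
  then have beyond: "f m < M" if "m > N" for m
    using that by (simp add: not_le)
  have "f m \<le> max M (Max (f ` {..N}))" for m
  proof (cases "m \<le> N")
    case True
    then have "f m \<le> Max (f ` {..N})" by (intro Max_ge) auto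
    then show ?thesis by linarith
  next
    case False
    then show ?thesis using beyond[of m] by linarith
  qed
  then have "bdd_above (range f)" by (rule bdd_aboveI2)
  with assms show False by contradiction
qed

lemma unbounded_strict_mono_subseq_ge:
  fixes f b :: "nat \<Rightarrow> real"
  assumes "\<not> bdd_above (range f)"
  shows "\<exists>n. strict_mono n \<and> n 0 > 0 \<and> (\<forall>k. f (n k) \<ge> b k)"
proof -
  have "\<exists>n. \<forall>k. (n k > 0 \<and> f (n k) \<ge> b k) \<and> n k < n (Suc k)"
  proof (rule dependent_nat_choice)
    show "\<exists>m. m > 0 \<and> f m \<ge> b 0"
      using unbounded_exceeds_beyond[OF assms, of 0 "b 0"] by simp
    show "\<exists>m'. (m' > 0 \<and> f m' \<ge> b (Suc k)) \<and> m < m'" if "m > 0 \<and> f m \<ge> b k" for m k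
      using unbounded_exceeds_beyond[OF assms, of m "b (Suc k)"] that by (auto intro: less_trans)
  qed
  then obtain n where "\<And>k. n k > 0" "\<And>k. f (n k) \<ge> b k" "\<And>k. n k < n (Suc k)"
    by blast
  then show ?thesis by (intro exI[of _ n]) (simp add: strict_mono_Suc_iff)
qed

theorem mainTheorem4:
  fixes \<beta> :: "nat \<Rightarrow> real"
  assumes pos: "\<And>n. \<beta> n > 0"
    and liminf: "liminf (\<lambda>n. ereal (\<beta> n powr (1 / real n))) \<ge> 1"
    and bdd: "\<And>\<phi>. is_symbol \<phi> \<Longrightarrow> \<phi> 0 = 0 \<Longrightarrow> comp_bounded \<beta> \<phi>"
  shows "bdd_above (range \<beta>)"
proof (rule ccontr)
  assume "\<not> bdd_above (range \<beta>)"
  from unbounded_strict_mono_subseq_ge[OF this, of "\<lambda>k. 4 ^ (k + 2)"]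
  obtain n where n: "strict_mono n" "n 0 > 0" "\<And>k. \<beta> (n k) \<ge> 4 ^ (k + 2)"
    by auto
  define c :: "nat \<Rightarrow> real" where "c k = 1/4 * (1/2) ^ k" for k
  define a where "a = lacunary_coeffs n c"
  have c_nonneg: "c k \<ge> 0" for k by (simp add: c_def)
  have c_sums: "c sums (1/2)"
    unfolding c_def[abs_def] using sums_mult[OF geometric_sums[of "1/2::real"], of "1/4"] by simp
  have c_beta: "c k ^ 2 * \<beta> (n k) \<ge> 1" for k
  proof -
    have "c k ^ 2 * 4 ^ (k + 2) = ((1/2) ^ k * 2 ^ k)\<^sup>2"
      by (simp add: c_def power_add power_mult_distrib power2_eq_square flip: power_mult_distrib)
    also have "\<dots> = 1" by (simp flip: power_mult_distrib)
    finally show ?thesis using mult_left_mono[OF n(3)[of k], of "c k ^ 2"] by simp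
  qed
  have "summable (\<lambda>m. norm (a m))"
    using norm_lacunary_coeffs_sums[OF n(1) c_nonneg c_sums] by (simp add: a_def sums_iff)
  moreover have "in_H2 \<beta> (eval_fps (Abs_fps a))"
    using is_symbol_lacunary[OF n(1,2) c_nonneg c_sums] eval_fps_lacunary_at_0[OF n(1,2)]
    by (intro in_H2_if_comp_bounded bdd) (simp_all add: a_def c_def)
  ultimately have "summable (\<lambda>m. (norm (a m))\<^sup>2 * \<beta> m)"
    by (rule summable_coeffs_if_in_H2_eval_fps)
  from LIMSEQ_subseq_LIMSEQ[OF summable_LIMSEQ_zero[OF this] n(1)]
  have "(\<lambda>k. c k ^ 2 * \<beta> (n k)) \<longlonglongrightarrow> 0"
    using c_nonneg by (simp add: o_def a_def lacunary_coeffs_at n(1))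
  then have "eventually (\<lambda>k. c k ^ 2 * \<beta> (n k) < 1) sequentially"
    by (rule order_tendstoD(2)) simp
  then obtain k where "c k ^ 2 * \<beta> (n k) < 1"
    by (auto simp: eventually_sequentially)
  with c_beta[of k] show False by simp
qed

end
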